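(* Fix range parameters $0<L_I\le U_I$ and $0\le L_V\le U_V$, and let $\alpha=(a_1,\dots,a_w)$. Let $a_i\in\mathbb{L}^{t+1}_\alpha$. Suppose $a_k$ is the leftmost non-black item of $\mathbb{L}^t_\alpha$ satisfying $L_V\le a_i-a_k$ and $i-k\le U_I$; that is, $a_k$ is the leftmost partially-proper item of $a_i$. Then $a_i$ has a range-proper predecessor if and only if $a_k$ is a range-proper predecessor of $a_i$.
   Context: Let $\alpha=(a_1,\dots,a_w)$ be a finite sequence of real numbers, with items identified by their positions. Increasing subsequences are non-strict. $a_j$ is compatible with $a_i$ if $j<i$ and $a_j\le a_i$. $RL_\alpha(a)$ is the maximum length of an increasing subsequence ending at $a$. $a_j$ is a predecessor of $a_i$ if it is compatible with $a_i$ and $RL_\alpha(a_j)=RL_\alpha(a_i)-1$. The horizontal list $\mathbb{L}^t_\alpha$ is the list of items of rising length $t$, ordered by position; "left of" means earlier position. Items are colored black or non-black recursively by level: all items of $\mathbb{L}^1_\alpha$ are non-black, and an item of $\mathbb{L}^{t+1}_\alpha$ is non-black iff it has a range-proper predecessor. Here a range-proper predecessor of $a_i$ is a non-black predecessor $a_k$ with $L_V\le a_i-a_k\le U_V$ and $L_I\le i-k\le U_I$. *)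

theory Defs
  imports Complex_Main
begin

text \<open>The sequence alpha = (a_1,...,a_w) is a list xs of reals; item a_i is xs ! i with
  0-based position i < length xs (positions are only compared / subtracted, so the shift
  from 1-based indexing is immaterial).\<close>

definition compatible :: "real list \<Rightarrow> nat \<Rightarrow> nat \<Rightarrow> bool" where
  "compatible xs j i \<longleftrightarrow> j < i \<and> i < length xs \<and> xs ! j \<le> xs ! i"

definition inc_subseq_ending :: "real list \<Rightarrow> nat \<Rightarrow> nat list \<Rightarrow> bool" where
  "inc_subseq_ending xs i js \<longleftrightarrow>
     js \<noteq> [] \<and> last js = i \<and> sorted_wrt (<) js \<and> (\<forall>j\<in>set js. j < length xs) \<and>
     sorted_wrt (\<lambda>p q. xs ! p \<le> xs ! q) js"

definition RL :: "real list \<Rightarrow> nat \<Rightarrow> nat" where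
  "RL xs i = Max (length ` {js. inc_subseq_ending xs i js})"

definition predecessor :: "real list \<Rightarrow> nat \<Rightarrow> nat \<Rightarrow> bool" where
  "predecessor xs j i \<longleftrightarrow> compatible xs j i \<and> RL xs j = RL xs i - 1"

definition in_L :: "real list \<Rightarrow> nat \<Rightarrow> nat \<Rightarrow> bool" where
  "in_L xs t i \<longleftrightarrow> i < length xs \<and> RL xs i = t"

text \<open>Non-black items (least fixed point of the level-by-level recursive colouring).\<close>
inductive nonblack :: "nat \<Rightarrow> nat \<Rightarrow> real \<Rightarrow> real \<Rightarrow> real list \<Rightarrow> nat \<Rightarrow> bool"
  for LI UI :: nat and LV UV :: real and xs :: "real list" where
  level1: "i < length xs \<Longrightarrow> RL xs i = 1 \<Longrightarrow> nonblack LI UI LV UV xs i"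
| step: "predecessor xs k i \<Longrightarrow> nonblack LI UI LV UV xs k \<Longrightarrow>
         LV \<le> xs ! i - xs ! k \<Longrightarrow> xs ! i - xs ! k \<le> UV \<Longrightarrow>
         int LI \<le> int i - int k \<Longrightarrow> int i - int k \<le> int UI \<Longrightarrow>
         nonblack LI UI LV UV xs i"

definition range_proper_pred :: "nat \<Rightarrow> nat \<Rightarrow> real \<Rightarrow> real \<Rightarrow> real list \<Rightarrow> nat \<Rightarrow> nat \<Rightarrow> bool" where
  "range_proper_pred LI UI LV UV xs k i \<longleftrightarrow>
     predecessor xs k i \<and> nonblack LI UI LV UV xs k \<and>
     LV \<le> xs ! i - xs ! k \<and> xs ! i - xs ! k \<le> UV \<and>
     int LI \<le> int i - int k \<and> int i - int k \<le> int UI"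

end

theory Submission
  imports Defs
begin

text \<open>Items of one horizontal list form a strictly decreasing sequence, since an
  increasing subsequence ending at an item extends to any later item that is at least as
  large. So if some a_k' is a range-proper predecessor of a_i, then k \<le> k' by leftmostness,
  hence a_k' \<le> a_k: the value difference a_i - a_k lies between L_V and a_i - a_k' \<le> U_V,
  and the index difference i - k lies between i - k' \<ge> L_I and U_I.\<close>

lemma sorted_wrt_last:
  "sorted_wrt R js \<Longrightarrow> x \<in> set js \<Longrightarrow> x \<noteq> last js \<Longrightarrow> R x (last js)"
  by (induction js) (auto simp: last_in_set)

lemma length_le_of_inc_subseq_ending:
  assumes "inc_subseq_ending xs i js"
  shows "length js \<le> length xs"
proof -
  have "distinct js" and "set js \<subseteq> {..<length xs}"
    using assms strict_sorted_iff by (auto simp: inc_subseq_ending_def)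
  then show ?thesis
    using card_mono[of "{..<length xs}" "set js"] by (simp add: distinct_card)
qed

lemma finite_lengths_inc_subseq_ending:
  "finite (length ` {js. inc_subseq_ending xs i js})"
  by (rule finite_subset[of _ "{..length xs}"]) (auto dest: length_le_of_inc_subseq_ending)

lemma RL_attained:
  assumes "i < length xs"
  obtains js where "inc_subseq_ending xs i js" and "length js = RL xs i"
proof -
  have "inc_subseq_ending xs i [i]" using assms by (simp add: inc_subseq_ending_def)
  then have "RL xs i \<in> length ` {js. inc_subseq_ending xs i js}"
    unfolding RL_def using finite_lengths_inc_subseq_ending by (intro Max_in) auto
  then show ?thesis using that by auto
qed

lemma length_le_RL:
  assumes "inc_subseq_ending xs i js"
  shows "length js \<le> RL xs i"
  unfolding RL_def using assms finite_lengths_inc_subseq_ending by (intro Max_ge) auto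

lemma inc_subseq_ending_snoc:
  assumes "inc_subseq_ending xs j js" and "compatible xs j i"
  shows "inc_subseq_ending xs i (js @ [i])"
proof -
  have "last js = j" and "j < i" and "xs ! j \<le> xs ! i"
    using assms by (auto simp: inc_subseq_ending_def compatible_def)
  then have "\<forall>x\<in>set js. x < i \<and> xs ! x \<le> xs ! i"
    using assms(1) sorted_wrt_last[of "(<)" js] sorted_wrt_last[of "\<lambda>p q. xs ! p \<le> xs ! q" js]
    unfolding inc_subseq_ending_def by fastforce
  with assms show ?thesis
    by (auto simp: inc_subseq_ending_def compatible_def sorted_wrt_append)
qed

lemma RL_less_of_compatible:
  assumes "compatible xs j i"
  shows "RL xs j < RL xs i"
proof -
  have "j < length xs" using assms by (simp add: compatible_def)
  then obtain js where js: "inc_subseq_ending xs j js" "length js = RL xs j"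
    by (rule RL_attained)
  have "length (js @ [i]) \<le> RL xs i"
    using inc_subseq_ending_snoc[OF js(1) assms] by (rule length_le_RL)
  with js(2) show ?thesis by simp
qed

lemma in_L_strictly_decreasing:
  assumes "in_L xs t j" and "in_L xs t k" and "j < k"
  shows "xs ! k < xs ! j"
  using assms RL_less_of_compatible[of xs j k]
  by (fastforce simp: in_L_def compatible_def)

lemma predecessor_iff_in_L:
  assumes "in_L xs (t + 1) i"
  shows "predecessor xs k i \<longleftrightarrow> compatible xs k i \<and> in_L xs t k"
  using assms by (auto simp: predecessor_def in_L_def compatible_def)

theorem mainTheorem13:
  fixes LI UI :: nat and LV UV :: real and xs :: "real list" and i k t :: nat
  assumes "0 < LI" and "LI \<le> UI" and "0 \<le> LV" and "LV \<le> UV"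
    and "in_L xs (t + 1) i"
    and "in_L xs t k" and "nonblack LI UI LV UV xs k"
    and "LV \<le> xs ! i - xs ! k" and "int i - int k \<le> int UI"
    and "\<forall>k'<k. \<not> (in_L xs t k' \<and> nonblack LI UI LV UV xs k' \<and>
                     LV \<le> xs ! i - xs ! k' \<and> int i - int k' \<le> int UI)"
  shows "(\<exists>k'. range_proper_pred LI UI LV UV xs k' i) \<longleftrightarrow> range_proper_pred LI UI LV UV xs k i"
proof
  assume "\<exists>k'. range_proper_pred LI UI LV UV xs k' i"
  then obtain k' where k': "range_proper_pred LI UI LV UV xs k' i" ..
  then have "compatible xs k' i" and "in_L xs t k'"
    using predecessor_iff_in_L[OF assms(5)] by (auto simp: range_proper_pred_def)
  then have "k \<le> k'"
    using assms(10) k' by (meson not_le range_proper_pred_def)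
  have "xs ! k' \<le> xs ! k"
    using in_L_strictly_decreasing[OF assms(6) \<open>in_L xs t k'\<close>] \<open>k \<le> k'\<close>
    by (cases "k = k'") auto
  have "compatible xs k i"
    using \<open>compatible xs k' i\<close> \<open>k \<le> k'\<close> assms(3,8) by (auto simp: compatible_def)
  then show "range_proper_pred LI UI LV UV xs k i"
    using k' predecessor_iff_in_L[OF assms(5)] assms(6-9) \<open>k \<le> k'\<close> \<open>xs ! k' \<le> xs ! k\<close>
    by (auto simp: range_proper_pred_def)
qed blast

end
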